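(* Let $G$ be a group and $N$ a normal subgroup of $G$. If $S=\bigoplus_{g\in G}S_g$ is symmetrically $G$-graded, then the induced $G/N$-grading $\{S_C\}_{C\in G/N}$ is symmetric, i.e. $S_CS_{C^{-1}}S_C=S_C$ for all $C\in G/N$.
   Context: Rings are associative, not necessarily unital; $AB$ denotes finite sums of products. A $G$-grading: $S=\bigoplus_gS_g$, $S_gS_h\subseteq S_{gh}$; it is symmetric if $S_gS_{g^{-1}}S_g=S_g$ for all $g\in G$. The induced $G/N$-grading is $S_C=\bigoplus_{g\in C}S_g$ for $C\in G/N$. *)

theory Defs
  imports "HOL-Algebra.Coset"
begin

text \<open>Rings are modelled as the whole of a type of class ring
(associative, not necessarily unital).\<close>

definition setprod_ring :: "'a::ring set \<Rightarrow> 'a set \<Rightarrow> 'a set" where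
  "setprod_ring A B = {sum_list (map (\<lambda>(a, b). a * b) ps) | ps. set ps \<subseteq> A \<times> B}"

definition add_subgroup :: "'a::ring set \<Rightarrow> bool" where
  "add_subgroup A \<longleftrightarrow> 0 \<in> A \<and> (\<forall>x\<in>A. \<forall>y\<in>A. x + y \<in> A) \<and> (\<forall>x\<in>A. - x \<in> A)"

definition group_graded :: "('g, 'm) monoid_scheme \<Rightarrow> ('g \<Rightarrow> 'a::ring set) \<Rightarrow> bool" where
  "group_graded G S \<longleftrightarrow>
     (\<forall>g\<in>carrier G. add_subgroup (S g)) \<and>
     (\<forall>g\<in>carrier G. \<forall>h\<in>carrier G. setprod_ring (S g) (S h) \<subseteq> S (g \<otimes>\<^bsub>G\<^esub> h)) \<and>
     (\<forall>x::'a. \<exists>!c. (\<forall>g. g \<notin> carrier G \<longrightarrow> c g = 0) \<and> finite {g. c g \<noteq> 0} \<and>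
         (\<forall>g\<in>carrier G. c g \<in> S g) \<and> x = (\<Sum>g\<in>{g. c g \<noteq> 0}. c g))"

definition symmetric_graded :: "('g, 'm) monoid_scheme \<Rightarrow> ('g \<Rightarrow> 'a::ring set) \<Rightarrow> bool" where
  "symmetric_graded G S \<longleftrightarrow> group_graded G S \<and>
     (\<forall>g\<in>carrier G. setprod_ring (setprod_ring (S g) (S (inv\<^bsub>G\<^esub> g))) (S g) = S g)"

definition induced_comp :: "('g \<Rightarrow> 'a::ring set) \<Rightarrow> 'g set \<Rightarrow> 'a set" where
  "induced_comp S C = {\<Sum>g\<in>F. c g | F c. finite F \<and> F \<subseteq> C \<and> (\<forall>g\<in>F. c g \<in> S g)}"

end

theory Submission
  imports Defs
begin

text \<open>Multiplying induced components multiplies their index sets, so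
  S_C S_(C^-1) S_C lies in the component of C C^-1 C = C, the product taken in G/N.
  Conversely, for g in C the homogeneous piece S_g = S_g S_(g^-1) S_g lies in S_C S_(C^-1) S_C,
  because g^-1 is in C^-1; as S_C is spanned additively by these pieces, it lies there too.\<close>

lemma setprod_ring_mono: "A \<subseteq> A' \<Longrightarrow> B \<subseteq> B' \<Longrightarrow> setprod_ring A B \<subseteq> setprod_ring A' B'"
  unfolding setprod_ring_def by blast

lemma zero_mem_setprod_ring: "0 \<in> setprod_ring A B"
  unfolding setprod_ring_def by (intro CollectI exI[of _ "[]"]) simp

lemma add_mem_setprod_ring:
  assumes "x \<in> setprod_ring A B" and "y \<in> setprod_ring A B"
  shows "x + y \<in> setprod_ring A B"
proof -
  obtain ps qs where "set ps \<subseteq> A \<times> B" "set qs \<subseteq> A \<times> B"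
    and "x + y = sum_list (map (\<lambda>(a, b). a * b) (ps @ qs))"
    using assms unfolding setprod_ring_def by auto
  then show ?thesis
    unfolding setprod_ring_def by (intro CollectI exI[of _ "ps @ qs"]) auto
qed

lemma mult_mem_setprod_ring: "a \<in> A \<Longrightarrow> b \<in> B \<Longrightarrow> a * b \<in> setprod_ring A B"
  unfolding setprod_ring_def by (intro CollectI exI[of _ "[(a, b)]"]) auto

lemma setprod_ring_least:
  assumes "0 \<in> T" "\<And>x y. x \<in> T \<Longrightarrow> y \<in> T \<Longrightarrow> x + y \<in> T"
    and "\<And>a b. a \<in> A \<Longrightarrow> b \<in> B \<Longrightarrow> a * b \<in> T"
  shows "setprod_ring A B \<subseteq> T"
proof
  fix x assume "x \<in> setprod_ring A B"
  then obtain ps where x: "x = sum_list (map (\<lambda>(a, b). a * b) ps)" and "set ps \<subseteq> A \<times> B"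
    unfolding setprod_ring_def by blast
  then show "x \<in> T"
    unfolding x by (induction ps) (auto intro: assms)
qed

lemma zero_mem_induced_comp: "0 \<in> induced_comp S X"
  unfolding induced_comp_def by (intro CollectI exI[of _ "{}"]) auto

lemma component_subset_induced_comp: "g \<in> X \<Longrightarrow> S g \<subseteq> induced_comp S X"
  unfolding induced_comp_def by (auto intro!: exI[of _ "{g}"])

lemma add_mem_induced_comp:
  assumes sub: "\<And>g. g \<in> X \<Longrightarrow> add_subgroup (S g)"
    and x: "x \<in> induced_comp S X" and y: "y \<in> induced_comp S X"
  shows "x + y \<in> induced_comp S X"
proof -
  obtain F c where F: "finite F" "F \<subseteq> X" "\<forall>g\<in>F. c g \<in> S g" "x = (\<Sum>g\<in>F. c g)"
    using x unfolding induced_comp_def by blast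
  obtain H d where H: "finite H" "H \<subseteq> X" "\<forall>g\<in>H. d g \<in> S g" "y = (\<Sum>g\<in>H. d g)"
    using y unfolding induced_comp_def by blast
  define e where "e g = (if g \<in> F then c g else 0) + (if g \<in> H then d g else 0)" for g
  have "x = (\<Sum>g\<in>F \<union> H. if g \<in> F then c g else 0)"
    using F H by (simp add: sum.If_cases Int_absorb1)
  moreover have "y = (\<Sum>g\<in>F \<union> H. if g \<in> H then d g else 0)"
    using F H by (simp add: sum.If_cases Int_absorb1 Int_commute)
  ultimately have "x + y = (\<Sum>g\<in>F \<union> H. e g)"
    unfolding e_def by (simp add: sum.distrib)
  moreover have "e g \<in> S g" if "g \<in> F \<union> H" for g
    using that F H sub[of g] unfolding e_def add_subgroup_def by auto
  ultimately show ?thesis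
    unfolding induced_comp_def using F H by blast
qed

lemma induced_comp_least:
  assumes "0 \<in> T" "\<And>x y. x \<in> T \<Longrightarrow> y \<in> T \<Longrightarrow> x + y \<in> T"
    and "\<And>g. g \<in> X \<Longrightarrow> S g \<subseteq> T"
  shows "induced_comp S X \<subseteq> T"
proof
  fix x assume "x \<in> induced_comp S X"
  then obtain F c where "finite F" "F \<subseteq> X" "\<forall>g\<in>F. c g \<in> S g" and x: "x = (\<Sum>g\<in>F. c g)"
    unfolding induced_comp_def by blast
  then show "x \<in> T"
    unfolding x by (induction F rule: finite_induct) (use assms in auto)
qed

lemma setprod_induced_comp_subset:
  assumes gr: "group_graded G S" and "monoid G"
    and X: "X \<subseteq> carrier G" and Y: "Y \<subseteq> carrier G"
  shows "setprod_ring (induced_comp S X) (induced_comp S Y) \<subseteq> induced_comp S (X <#>\<^bsub>G\<^esub> Y)"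
proof -
  let ?Z = "induced_comp S (X <#>\<^bsub>G\<^esub> Y)"
  have sub: "\<forall>g\<in>carrier G. add_subgroup (S g)"
    and mult: "\<forall>g\<in>carrier G. \<forall>h\<in>carrier G. setprod_ring (S g) (S h) \<subseteq> S (g \<otimes>\<^bsub>G\<^esub> h)"
    using gr unfolding group_graded_def by blast+
  have "X <#>\<^bsub>G\<^esub> Y \<subseteq> carrier G"
    using X Y by (rule monoid.set_mult_closed[OF \<open>monoid G\<close>])
  then have add: "x + y \<in> ?Z" if "x \<in> ?Z" "y \<in> ?Z" for x y
    using add_mem_induced_comp[OF _ that] sub by blast
  have homogeneous: "a * b \<in> ?Z" if "g \<in> X" "h \<in> Y" "a \<in> S g" "b \<in> S h" for g h a b
  proof -
    have "setprod_ring (S g) (S h) \<subseteq> S (g \<otimes>\<^bsub>G\<^esub> h)"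
      using mult that(1,2) X Y by blast
    then have "a * b \<in> S (g \<otimes>\<^bsub>G\<^esub> h)"
      using mult_mem_setprod_ring[OF that(3,4)] by (rule subsetD)
    moreover have "S (g \<otimes>\<^bsub>G\<^esub> h) \<subseteq> ?Z"
      using that(1,2) by (intro component_subset_induced_comp) (auto simp: set_mult_def)
    ultimately show ?thesis by blast
  qed
  have "x * y \<in> ?Z" if x: "x \<in> induced_comp S X" and y: "y \<in> induced_comp S Y" for x y
  proof -
    have "a * y \<in> ?Z" if "g \<in> X" "a \<in> S g" for g a
    proof -
      have "induced_comp S Y \<subseteq> {y. a * y \<in> ?Z}"
        using homogeneous[OF that(1) _ that(2)]
        by (intro induced_comp_least) (auto simp: distrib_left zero_mem_induced_comp add)
      then show ?thesis using y by blast
    qed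
    then have "induced_comp S X \<subseteq> {x. x * y \<in> ?Z}"
      by (intro induced_comp_least) (auto simp: distrib_right zero_mem_induced_comp add)
    then show ?thesis using x by blast
  qed
  then show ?thesis
    by (intro setprod_ring_least) (auto intro: zero_mem_induced_comp add)
qed

lemma induced_comp_subset_setprod_set_inv:
  assumes sym: "symmetric_graded G S" and X: "X \<subseteq> carrier G"
  defines "P \<equiv> setprod_ring (setprod_ring (induced_comp S X) (induced_comp S (set_inv\<^bsub>G\<^esub> X)))
                 (induced_comp S X)"
  shows "induced_comp S X \<subseteq> P"
proof (rule induced_comp_least)
  show "0 \<in> P" and "\<And>x y. x \<in> P \<Longrightarrow> y \<in> P \<Longrightarrow> x + y \<in> P"
    unfolding P_def by (rule zero_mem_setprod_ring, rule add_mem_setprod_ring)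
  fix g assume g: "g \<in> X"
  then have "inv\<^bsub>G\<^esub> g \<in> set_inv\<^bsub>G\<^esub> X"
    unfolding SET_INV_def by blast
  then have "setprod_ring (setprod_ring (S g) (S (inv\<^bsub>G\<^esub> g))) (S g) \<subseteq> P"
    unfolding P_def using g by (intro setprod_ring_mono component_subset_induced_comp)
  moreover have "setprod_ring (setprod_ring (S g) (S (inv\<^bsub>G\<^esub> g))) (S g) = S g"
    using sym g X unfolding symmetric_graded_def by blast
  ultimately show "S g \<subseteq> P" by simp
qed

theorem proposition5p5:
  fixes G :: "('g, 'm) monoid_scheme" and N :: "'g set" and S :: "'g \<Rightarrow> 'a::ring set"
  assumes "group G" and "N \<lhd> G" and "symmetric_graded G S"
  shows "\<forall>C\<in>carrier (G Mod N).
           setprod_ring (setprod_ring (induced_comp S C) (induced_comp S (inv\<^bsub>G Mod N\<^esub> C)))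
             (induced_comp S C) = induced_comp S C"
proof
  fix C assume C: "C \<in> carrier (G Mod N)"
  interpret normal N G by fact
  interpret quotient: group "G Mod N" by (rule factorgroup_is_group)
  let ?C' = "inv\<^bsub>G Mod N\<^esub> C"
  have gr: "group_graded G S"
    using assms(3) unfolding symmetric_graded_def by blast
  have coset_subset: "D \<subseteq> carrier G" if "D \<in> carrier (G Mod N)" for D
    using that unfolding FactGroup_def by (simp add: rcosets_carrier)
  have C_carrier: "C \<subseteq> carrier G" and C'_carrier: "?C' \<subseteq> carrier G"
    using C by (simp_all add: coset_subset)
  have "C <#>\<^bsub>G\<^esub> ?C' = N"
    using quotient.r_inv[OF C] by simp
  then have CC'C: "C <#>\<^bsub>G\<^esub> ?C' <#>\<^bsub>G\<^esub> C = C"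
    using quotient.l_one[OF C] by simp
  have "setprod_ring (setprod_ring (induced_comp S C) (induced_comp S ?C')) (induced_comp S C)
      \<subseteq> setprod_ring (induced_comp S (C <#>\<^bsub>G\<^esub> ?C')) (induced_comp S C)"
    by (intro setprod_ring_mono setprod_induced_comp_subset[OF gr is_monoid C_carrier C'_carrier]
        order.refl)
  also have "\<dots> \<subseteq> induced_comp S (C <#>\<^bsub>G\<^esub> ?C' <#>\<^bsub>G\<^esub> C)"
    using set_mult_closed[OF C_carrier C'_carrier]
    by (rule setprod_induced_comp_subset[OF gr is_monoid _ C_carrier])
  finally have "setprod_ring (setprod_ring (induced_comp S C) (induced_comp S ?C')) (induced_comp S C)
      \<subseteq> induced_comp S C"
    unfolding CC'C .
  moreover have "induced_comp S C \<subseteq>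
      setprod_ring (setprod_ring (induced_comp S C) (induced_comp S ?C')) (induced_comp S C)"
    using induced_comp_subset_setprod_set_inv[OF assms(3) C_carrier] by (simp add: inv_FactGroup[OF C])
  ultimately show "setprod_ring (setprod_ring (induced_comp S C) (induced_comp S ?C'))
      (induced_comp S C) = induced_comp S C"
    by (rule subset_antisym)
qed

end
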